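(* Let $M$ be an end-decisive MM-QFA that accepts every word of $L$ with probability at least $\lambda+\epsilon$ and every word not in $L$ with probability at most $\lambda-\epsilon$. Then for every positive integer $n$ there exists an MM-QFA $M'$ that accepts every word of $L$ with probability at least $(\lambda+\epsilon)^n$ and every word not in $L$ with probability at most $(\lambda-\epsilon)^n$.
   Context: A measure-many quantum finite automaton (MM-QFA) over $\Sigma$ is a tuple $(Q,\Sigma,\{U_\sigma\}_{\sigma\in\Sigma\cup\{\$\}},q_0,Q_{acc},Q_{rej})$ with $Q$ finite indexing an orthonormal basis of $\mathbb{C}^Q$, end-marker $\$\notin\Sigma$, unitary $U_\sigma$, initial state $q_0$, and $Q$ partitioned into $Q_{acc},Q_{rej},Q_{non}$ with orthogonal projections $P_{acc},P_{rej},P_{non}$. On input $x$ it processes $x\$$ maintaining $(\psi,p_{acc},p_{rej})$, initially $(|q_0\rangle,0,0)$; on reading $\sigma$: $\psi'=U_\sigma\psi$, $p_{acc}\mathrel{+}=\|P_{acc}\psi'\|^2$, $p_{rej}\mathrel{+}=\|P_{rej}\psi'\|^2$, $\psi\leftarrow P_{non}\psi'$; the acceptance probability is the final $p_{acc}$. It is end-decisive if $P_{acc}\psi'=0$ after reading every non-end-marker symbol, on every input. *)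

theory Defs
  imports "Jordan_Normal_Form.Matrix"
begin

text \<open>Measure-many quantum finite automata.  The basis states are the naturals
  0,...,dim-1; the input alphabet is a finite type 'a; the end-marker is None
  and an input symbol s is Some s.\<close>

record 'a mmqfa =
  qdim  :: nat
  trans :: "'a option \<Rightarrow> complex mat"
  qinit :: nat
  qacc  :: "nat set"
  qrej  :: "nat set"

definition cadjoint :: "complex mat \<Rightarrow> complex mat" where
  "cadjoint U = mat (dim_col U) (dim_row U) (\<lambda>(i,j). cnj (U $$ (j,i)))"

definition unitary_mat :: "nat \<Rightarrow> complex mat \<Rightarrow> bool" where
  "unitary_mat d U \<longleftrightarrow> U \<in> carrier_mat d d \<and> U * cadjoint U = 1\<^sub>m d \<and> cadjoint U * U = 1\<^sub>m d"

definition is_mmqfa :: "'a mmqfa \<Rightarrow> bool" where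
  "is_mmqfa M \<longleftrightarrow> qinit M < qdim M \<and> qacc M \<subseteq> {..<qdim M} \<and> qrej M \<subseteq> {..<qdim M}
     \<and> qacc M \<inter> qrej M = {} \<and> (\<forall>s. unitary_mat (qdim M) (trans M s))"

definition qnon :: "'a mmqfa \<Rightarrow> nat set" where
  "qnon M = {..<qdim M} - qacc M - qrej M"

definition proj :: "nat set \<Rightarrow> complex vec \<Rightarrow> complex vec" where
  "proj S v = vec (dim_vec v) (\<lambda>i. if i \<in> S then v $ i else 0)"

definition nsq :: "complex vec \<Rightarrow> real" where
  "nsq v = (\<Sum>i<dim_vec v. (cmod (v $ i))\<^sup>2)"

definition qstep :: "'a mmqfa \<Rightarrow> 'a option \<Rightarrow> complex vec \<times> real \<times> real \<Rightarrow> complex vec \<times> real \<times> real" where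
  "qstep M s st = (case st of (psi, pa, pr) \<Rightarrow>
     (let psi' = trans M s *\<^sub>v psi in
       (proj (qnon M) psi', pa + nsq (proj (qacc M) psi'), pr + nsq (proj (qrej M) psi'))))"

definition qrun :: "'a mmqfa \<Rightarrow> 'a option list \<Rightarrow> complex vec \<times> real \<times> real" where
  "qrun M ws = fold (qstep M) ws (unit_vec (qdim M) (qinit M), 0, 0)"

definition accprob :: "'a mmqfa \<Rightarrow> 'a list \<Rightarrow> real" where
  "accprob M x = fst (snd (qrun M (map Some x @ [None])))"

definition end_decisive :: "'a mmqfa \<Rightarrow> bool" where
  "end_decisive M \<longleftrightarrow> (\<forall>w s. proj (qacc M) (trans M (Some s) *\<^sub>v fst (qrun M (map Some w))) = 0\<^sub>v (qdim M))"

end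

theory Submission
  imports Defs
begin

text \<open>The product of two MM-QFAs runs them in parallel on the tensor product space: its
  transitions are Kronecker products of unitaries, and a product basis state is accepting
  iff both components are, non-halting iff both are, and rejecting otherwise.  Hence the
  non-halting part of the product's state is always the tensor product of those of the
  components.  For end-decisive automata all acceptance happens on the end-marker, where
  the accepting part of the product is again a tensor product; squared norms multiply,
  so acceptance probabilities multiply.  The \<open>n\<close>-fold product accepts \<open>x\<close> with
  probability \<open>accprob M x ^ n\<close>, and the bounds follow by monotonicity of powers.\<close>

lemma div_mod_less_of_less_mult:
  fixes k m n :: nat
  assumes "k < m * n"
  shows "k div n < m" and "k mod n < n"
proof -
  have "0 < n"
    using assms by (cases n) auto
  then show "k div n < m" and "k mod n < n"
    using assms by (simp_all add: less_mult_imp_div_less)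
qed

lemma mult_add_less_mult:
  fixes i j m n :: nat
  assumes "i < m" and "j < n"
  shows "i * n + j < m * n"
proof -
  have "i * n + j < Suc i * n" using assms(2) by simp
  also have "\<dots> \<le> m * n" using assms(1) by (intro mult_le_mono1) simp
  finally show ?thesis .
qed

lemma mult_add_div_mod:
  fixes i j n :: nat
  assumes "j < n"
  shows "(i * n + j) div n = i" and "(i * n + j) mod n = j"
  using assms by simp_all

lemma sum_lessThan_mult:
  fixes f :: "nat \<Rightarrow> 'b::comm_monoid_add"
  shows "(\<Sum>k<m*n. f k) = (\<Sum>i<m. \<Sum>j<n. f (i*n+j))"
proof -
  have "bij_betw (\<lambda>(i,j). i*n+j) ({..<m} \<times> {..<n}) {..<m*n}"
    by (rule bij_betw_byWitness[where f' = "\<lambda>k. (k div n, k mod n)"])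
      (auto simp: mult_add_less_mult div_mod_less_of_less_mult)
  then have "(\<Sum>k<m*n. f k) = (\<Sum>(i,j)\<in>{..<m} \<times> {..<n}. f (i*n+j))"
    by (simp add: sum.reindex_bij_betw[symmetric] case_prod_beta')
  then show ?thesis by (simp add: sum.cartesian_product)
qed

definition kron_mat :: "'a::times mat \<Rightarrow> 'a mat \<Rightarrow> 'a mat" where
  "kron_mat A B = mat (dim_row A * dim_row B) (dim_col A * dim_col B)
     (\<lambda>(i,j). A $$ (i div dim_row B, j div dim_col B) * B $$ (i mod dim_row B, j mod dim_col B))"

definition kron_vec :: "'a::times vec \<Rightarrow> 'a vec \<Rightarrow> 'a vec" where
  "kron_vec u v = vec (dim_vec u * dim_vec v) (\<lambda>k. u $ (k div dim_vec v) * v $ (k mod dim_vec v))"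

lemma dim_kron_mat [simp]:
  "dim_row (kron_mat A B) = dim_row A * dim_row B"
  "dim_col (kron_mat A B) = dim_col A * dim_col B"
  by (simp_all add: kron_mat_def)

lemma dim_kron_vec [simp]: "dim_vec (kron_vec u v) = dim_vec u * dim_vec v"
  by (simp add: kron_vec_def)

lemma kron_mat_mult:
  fixes A B C D :: "'a::comm_semiring_0 mat"
  assumes "dim_col A = dim_row C" and "dim_col B = dim_row D"
  shows "kron_mat A B * kron_mat C D = kron_mat (A * C) (B * D)"
proof (rule eq_matI)
  fix i j
  assume "i < dim_row (kron_mat (A * C) (B * D))" and "j < dim_col (kron_mat (A * C) (B * D))"
  then have i: "i < dim_row A * dim_row B" and j: "j < dim_col C * dim_col D" by simp_all
  have "(kron_mat A B * kron_mat C D) $$ (i,j)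
     = (\<Sum>k<dim_col A * dim_col B.
          A $$ (i div dim_row B, k div dim_col B) * B $$ (i mod dim_row B, k mod dim_col B)
          * (C $$ (k div dim_row D, j div dim_col D) * D $$ (k mod dim_row D, j mod dim_col D)))"
    using i j assms by (simp add: kron_mat_def scalar_prod_def atLeast0LessThan)
  also have "\<dots> = (\<Sum>a<dim_col A. \<Sum>b<dim_col B.
          A $$ (i div dim_row B, a) * B $$ (i mod dim_row B, b)
          * (C $$ (a, j div dim_col D) * D $$ (b, j mod dim_col D)))"
    using assms(2) by (simp add: sum_lessThan_mult mult_add_div_mod)
  also have "\<dots> = (\<Sum>a<dim_col A. A $$ (i div dim_row B, a) * C $$ (a, j div dim_col D))
          * (\<Sum>b<dim_col B. B $$ (i mod dim_row B, b) * D $$ (b, j mod dim_col D))"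
    by (simp add: sum_product algebra_simps)
  also have "\<dots> = kron_mat (A * C) (B * D) $$ (i,j)"
    using i j assms div_mod_less_of_less_mult[OF i] div_mod_less_of_less_mult[OF j]
    by (simp add: kron_mat_def scalar_prod_def atLeast0LessThan)
  finally show "(kron_mat A B * kron_mat C D) $$ (i,j) = kron_mat (A * C) (B * D) $$ (i,j)" .
qed (simp_all add: assms)

lemma kron_mat_mult_vec:
  fixes A B :: "'a::comm_semiring_0 mat"
  assumes "dim_col A = dim_vec u" and "dim_col B = dim_vec v"
  shows "kron_mat A B *\<^sub>v kron_vec u v = kron_vec (A *\<^sub>v u) (B *\<^sub>v v)"
proof (rule eq_vecI)
  fix i assume "i < dim_vec (kron_vec (A *\<^sub>v u) (B *\<^sub>v v))"
  then have i: "i < dim_row A * dim_row B" by simp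
  have "(kron_mat A B *\<^sub>v kron_vec u v) $ i
     = (\<Sum>k<dim_col A * dim_col B.
          A $$ (i div dim_row B, k div dim_col B) * B $$ (i mod dim_row B, k mod dim_col B)
          * (u $ (k div dim_vec v) * v $ (k mod dim_vec v)))"
    using i assms by (simp add: kron_mat_def kron_vec_def scalar_prod_def atLeast0LessThan)
  also have "\<dots> = (\<Sum>a<dim_col A. \<Sum>b<dim_col B.
          A $$ (i div dim_row B, a) * B $$ (i mod dim_row B, b) * (u $ a * v $ b))"
    using assms(2) by (simp add: sum_lessThan_mult mult_add_div_mod)
  also have "\<dots> = (\<Sum>a<dim_col A. A $$ (i div dim_row B, a) * u $ a)
          * (\<Sum>b<dim_col B. B $$ (i mod dim_row B, b) * v $ b)"
    by (simp add: sum_product algebra_simps)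
  also have "\<dots> = kron_vec (A *\<^sub>v u) (B *\<^sub>v v) $ i"
    using i assms div_mod_less_of_less_mult[OF i]
    by (simp add: kron_vec_def scalar_prod_def atLeast0LessThan)
  finally show "(kron_mat A B *\<^sub>v kron_vec u v) $ i = kron_vec (A *\<^sub>v u) (B *\<^sub>v v) $ i" .
qed simp

lemma dim_cadjoint [simp]:
  "dim_row (cadjoint A) = dim_col A"
  "dim_col (cadjoint A) = dim_row A"
  by (simp_all add: cadjoint_def)

lemma cadjoint_kron_mat: "cadjoint (kron_mat A B) = kron_mat (cadjoint A) (cadjoint B)"
  by (rule eq_matI) (auto simp: kron_mat_def cadjoint_def div_mod_less_of_less_mult)

lemma kron_mat_one: "kron_mat (1\<^sub>m m) (1\<^sub>m n) = (1\<^sub>m (m * n) :: 'a::semiring_1 mat)"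
proof (rule eq_matI)
  fix i j assume "i < dim_row (1\<^sub>m (m * n) :: 'a mat)" and "j < dim_col (1\<^sub>m (m * n) :: 'a mat)"
  then have i: "i < m * n" and j: "j < m * n" by simp_all
  have "(i div n = j div n \<and> i mod n = j mod n) \<longleftrightarrow> i = j"
    by (metis div_mult_mod_eq)
  then show "kron_mat (1\<^sub>m m) (1\<^sub>m n) $$ (i, j) = (1\<^sub>m (m * n) :: 'a mat) $$ (i, j)"
    using i j div_mod_less_of_less_mult[OF i] div_mod_less_of_less_mult[OF j]
    by (auto simp: kron_mat_def)
qed simp_all

lemma unitary_kron_mat:
  assumes "unitary_mat m A" and "unitary_mat n B"
  shows "unitary_mat (m * n) (kron_mat A B)"
  using assms unfolding unitary_mat_def
  by (auto simp: cadjoint_kron_mat kron_mat_mult kron_mat_one)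

definition kron_set :: "nat \<Rightarrow> nat set \<Rightarrow> nat set \<Rightarrow> nat set" where
  "kron_set n S T = {k. k div n \<in> S \<and> k mod n \<in> T}"

lemma kron_set_subset_lessThan:
  assumes "S \<subseteq> {..<m}" and "T \<subseteq> {..<n}"
  shows "kron_set n S T \<subseteq> {..<m * n}"
proof
  fix k assume "k \<in> kron_set n S T"
  then have "k div n * n + k mod n < m * n"
    using assms by (intro mult_add_less_mult) (auto simp: kron_set_def)
  then show "k \<in> {..<m * n}" by simp
qed

lemma proj_kron_vec:
  assumes "dim_vec v = n"
  shows "proj (kron_set n S T) (kron_vec u v) = kron_vec (proj S u) (proj T v)"
  using assms
  by (intro eq_vecI) (auto simp: proj_def kron_vec_def kron_set_def div_mod_less_of_less_mult)

lemma nsq_kron_vec: "nsq (kron_vec u v) = nsq u * nsq v"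
proof -
  have "nsq (kron_vec u v)
      = (\<Sum>k<dim_vec u * dim_vec v. (cmod (u $ (k div dim_vec v)))\<^sup>2 * (cmod (v $ (k mod dim_vec v)))\<^sup>2)"
    by (simp add: nsq_def kron_vec_def norm_mult power_mult_distrib)
  also have "\<dots> = (\<Sum>i<dim_vec u. \<Sum>j<dim_vec v. (cmod (u $ i))\<^sup>2 * (cmod (v $ j))\<^sup>2)"
    by (simp add: sum_lessThan_mult mult_add_div_mod)
  also have "\<dots> = nsq u * nsq v"
    by (simp add: nsq_def sum_product)
  finally show ?thesis .
qed

lemma kron_vec_unit_vec:
  assumes "i < m" and "j < n"
  shows "kron_vec (unit_vec m i) (unit_vec n j) = (unit_vec (m * n) (i * n + j) :: 'a::semiring_1 vec)"
proof (rule eq_vecI)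
  fix k assume "k < dim_vec (unit_vec (m * n) (i * n + j))"
  then have k: "k < m * n" by simp
  have "k = i * n + j \<longleftrightarrow> k div n = i \<and> k mod n = j"
    using assms by (metis div_mult_mod_eq mult_add_div_mod)
  then show "kron_vec (unit_vec m i) (unit_vec n j) $ k = (unit_vec (m * n) (i * n + j) :: 'a vec) $ k"
    using k div_mod_less_of_less_mult[OF k] by (auto simp: kron_vec_def unit_vec_def)
qed simp

lemma kron_vec_zero_left: "kron_vec (0\<^sub>v m) (v :: 'a::mult_zero vec) = 0\<^sub>v (m * dim_vec v)"
  by (rule eq_vecI) (auto simp: kron_vec_def div_mod_less_of_less_mult)

lemma dim_trans:
  assumes "is_mmqfa M"
  shows "dim_row (trans M s) = qdim M" and "dim_col (trans M s) = qdim M"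
  using assms by (auto simp: is_mmqfa_def unitary_mat_def)

lemma qrun_snoc: "qrun M (ws @ [s]) = qstep M s (qrun M ws)"
  by (simp add: qrun_def)

lemma fst_qstep: "fst (qstep M s st) = proj (qnon M) (trans M s *\<^sub>v fst st)"
  by (cases st) (simp add: qstep_def Let_def)

lemma fst_snd_qstep:
  "fst (snd (qstep M s st)) = fst (snd st) + nsq (proj (qacc M) (trans M s *\<^sub>v fst st))"
  by (cases st) (simp add: qstep_def Let_def)

lemma dim_proj [simp]: "dim_vec (proj S v) = dim_vec v"
  by (simp add: proj_def)

lemma nsq_zero [simp]: "nsq (0\<^sub>v n) = 0"
  by (simp add: nsq_def)

lemma nsq_nonneg: "0 \<le> nsq v"
  by (simp add: nsq_def sum_nonneg)

lemma dim_fst_qrun: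
  assumes "is_mmqfa M"
  shows "dim_vec (fst (qrun M ws)) = qdim M"
  by (induction ws rule: rev_induct)
    (simp_all add: qrun_def qrun_snoc fst_qstep dim_trans[OF assms])

lemma fst_snd_qrun_nonneg: "0 \<le> fst (snd (qrun M ws))"
  by (induction ws rule: rev_induct) (simp_all add: qrun_def qrun_snoc fst_snd_qstep nsq_nonneg)

lemma accprob_nonneg: "0 \<le> accprob M x"
  by (simp add: accprob_def fst_snd_qrun_nonneg)

definition acc_part :: "'a mmqfa \<Rightarrow> 'a option list \<Rightarrow> 'a option \<Rightarrow> complex vec" where
  "acc_part M ws s = proj (qacc M) (trans M s *\<^sub>v fst (qrun M ws))"

lemma end_decisive_iff_acc_part:
  "end_decisive M \<longleftrightarrow> (\<forall>w s. acc_part M (map Some w) (Some s) = 0\<^sub>v (qdim M))"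
  by (simp add: end_decisive_def acc_part_def)

lemma dim_acc_part:
  assumes "is_mmqfa M"
  shows "dim_vec (acc_part M ws s) = qdim M"
  using assms by (simp add: acc_part_def dim_fst_qrun dim_trans)

lemma fst_snd_qrun_end_decisive:
  assumes "end_decisive M"
  shows "fst (snd (qrun M (map Some w))) = 0"
  using assms
  by (induction w rule: rev_induct) (simp_all add: qrun_def qrun_snoc fst_snd_qstep end_decisive_def)

lemma accprob_end_decisive:
  assumes "end_decisive M"
  shows "accprob M x = nsq (acc_part M (map Some x) None)"
  using fst_snd_qrun_end_decisive[OF assms]
  by (simp add: accprob_def qrun_snoc fst_snd_qstep acc_part_def)

definition mmqfa_prod :: "'a mmqfa \<Rightarrow> 'a mmqfa \<Rightarrow> 'a mmqfa" where
  "mmqfa_prod M N =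
    \<lparr>qdim = qdim M * qdim N,
     trans = (\<lambda>s. kron_mat (trans M s) (trans N s)),
     qinit = qinit M * qdim N + qinit N,
     qacc = kron_set (qdim N) (qacc M) (qacc N),
     qrej = {..<qdim M * qdim N} - kron_set (qdim N) (qacc M) (qacc N)
              - kron_set (qdim N) (qnon M) (qnon N)\<rparr>"

lemma mmqfa_prod_simps [simp]:
  "qdim (mmqfa_prod M N) = qdim M * qdim N"
  "trans (mmqfa_prod M N) s = kron_mat (trans M s) (trans N s)"
  "qinit (mmqfa_prod M N) = qinit M * qdim N + qinit N"
  "qacc (mmqfa_prod M N) = kron_set (qdim N) (qacc M) (qacc N)"
  by (simp_all add: mmqfa_prod_def)

lemma qnon_mmqfa_prod: "qnon (mmqfa_prod M N) = kron_set (qdim N) (qnon M) (qnon N)"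
proof -
  have "kron_set (qdim N) (qnon M) (qnon N) \<subseteq> {..<qdim M * qdim N}"
    by (rule kron_set_subset_lessThan) (auto simp: qnon_def)
  moreover have "kron_set (qdim N) (qnon M) (qnon N) \<inter> kron_set (qdim N) (qacc M) (qacc N) = {}"
    by (auto simp: kron_set_def qnon_def)
  ultimately show ?thesis
    by (auto simp: qnon_def mmqfa_prod_def)
qed

lemma is_mmqfa_prod:
  assumes "is_mmqfa M" and "is_mmqfa N"
  shows "is_mmqfa (mmqfa_prod M N)"
proof -
  have "qinit M * qdim N + qinit N < qdim M * qdim N"
    using assms by (intro mult_add_less_mult) (auto simp: is_mmqfa_def)
  moreover have "kron_set (qdim N) (qacc M) (qacc N) \<subseteq> {..<qdim M * qdim N}"
    using assms by (intro kron_set_subset_lessThan) (auto simp: is_mmqfa_def)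
  ultimately show ?thesis
    using assms unitary_kron_mat by (auto simp: is_mmqfa_def mmqfa_prod_def)
qed

lemma fst_qrun_mmqfa_prod:
  assumes "is_mmqfa M" and "is_mmqfa N"
  shows "fst (qrun (mmqfa_prod M N) ws) = kron_vec (fst (qrun M ws)) (fst (qrun N ws))"
proof (induction ws rule: rev_induct)
  case Nil
  then show ?case
    using assms by (simp add: qrun_def kron_vec_unit_vec is_mmqfa_def)
next
  case (snoc s ws)
  then show ?case
    using assms
    by (simp add: qrun_snoc fst_qstep kron_mat_mult_vec proj_kron_vec qnon_mmqfa_prod
        dim_fst_qrun dim_trans)
qed

lemma acc_part_mmqfa_prod:
  assumes "is_mmqfa M" and "is_mmqfa N"
  shows "acc_part (mmqfa_prod M N) ws s = kron_vec (acc_part M ws s) (acc_part N ws s)"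
  using assms
  by (simp add: acc_part_def fst_qrun_mmqfa_prod kron_mat_mult_vec proj_kron_vec
      dim_fst_qrun dim_trans)

lemma end_decisive_mmqfa_prod:
  assumes "is_mmqfa M" and "is_mmqfa N" and "end_decisive M"
  shows "end_decisive (mmqfa_prod M N)"
  using assms
  by (simp add: end_decisive_iff_acc_part acc_part_mmqfa_prod kron_vec_zero_left dim_acc_part)

lemma accprob_mmqfa_prod:
  assumes "is_mmqfa M" and "is_mmqfa N" and "end_decisive M" and "end_decisive N"
  shows "accprob (mmqfa_prod M N) x = accprob M x * accprob N x"
  using assms
  by (simp add: accprob_end_decisive end_decisive_mmqfa_prod acc_part_mmqfa_prod nsq_kron_vec)

text \<open>\<open>mmqfa_pow M n\<close> is the product of \<open>n + 1\<close> copies of \<open>M\<close>.\<close>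

primrec mmqfa_pow :: "'a mmqfa \<Rightarrow> nat \<Rightarrow> 'a mmqfa" where
  "mmqfa_pow M 0 = M"
| "mmqfa_pow M (Suc n) = mmqfa_prod (mmqfa_pow M n) M"

lemma is_mmqfa_pow:
  assumes "is_mmqfa M"
  shows "is_mmqfa (mmqfa_pow M n)"
  using assms by (induction n) (simp_all add: is_mmqfa_prod)

lemma end_decisive_pow:
  assumes "is_mmqfa M" and "end_decisive M"
  shows "end_decisive (mmqfa_pow M n)"
  using assms by (induction n) (simp_all add: end_decisive_mmqfa_prod is_mmqfa_pow)

lemma accprob_pow:
  assumes "is_mmqfa M" and "end_decisive M"
  shows "accprob (mmqfa_pow M n) x = accprob M x ^ Suc n"
  using assms
  by (induction n) (simp_all add: accprob_mmqfa_prod is_mmqfa_pow end_decisive_pow)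

theorem lemma4p10:
  fixes M :: "('a::finite) mmqfa" and L :: "'a list set" and lam eps :: real and n :: nat
  assumes "is_mmqfa M" and "end_decisive M"
    and "0 < eps" and "eps \<le> lam"
    and "\<forall>x\<in>L. accprob M x \<ge> lam + eps"
    and "\<forall>x. x \<notin> L \<longrightarrow> accprob M x \<le> lam - eps"
    and "0 < n"
  shows "\<exists>M' :: 'a mmqfa. is_mmqfa M'
    \<and> (\<forall>x\<in>L. accprob M' x \<ge> (lam + eps) ^ n)
    \<and> (\<forall>x. x \<notin> L \<longrightarrow> accprob M' x \<le> (lam - eps) ^ n)"
proof -
  obtain k where "n = Suc k"
    using \<open>0 < n\<close> gr0_implies_Suc by blast
  then have accprob_pow_M: "accprob (mmqfa_pow M k) x = accprob M x ^ n" for x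
    using accprob_pow[OF assms(1,2)] by simp
  show ?thesis
  proof (intro exI conjI)
    show "is_mmqfa (mmqfa_pow M k)"
      using assms(1) by (rule is_mmqfa_pow)
    show "\<forall>x\<in>L. (lam + eps) ^ n \<le> accprob (mmqfa_pow M k) x"
      using assms(3-5) by (simp add: accprob_pow_M power_mono)
    show "\<forall>x. x \<notin> L \<longrightarrow> accprob (mmqfa_pow M k) x \<le> (lam - eps) ^ n"
      using assms(3,4,6) by (simp add: accprob_pow_M power_mono accprob_nonneg)
  qed
qed

end
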